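(* Let $D$ be a square-free integer, let $\mathbb{Z}[\sqrt{D}]$ denote the ring of integers of $\mathbb{Q}(\sqrt{D})$, and let $p$ be a prime integer which is irreducible but not prime in $\mathbb{Z}[\sqrt{D}]$. For any $z\in\mathbb{Z}[\sqrt{D}]$, we have $z\in I_p(D)$ if and only if the ideal $\langle p,z\rangle$ of $\mathbb{Z}[\sqrt{D}]$ is non-principal.
   Context: Here $\mathbb{Z}[\sqrt{D}]=\{a+b\sqrt{D}:a,b\in\mathbb{Z}\}$ if $D\equiv 2,3 \pmod 4$ and $\mathbb{Z}[\sqrt{D}]=\{\frac{a+b\sqrt{D}}{2}:a,b\in\mathbb{Z},\ a\equiv b \pmod 2\}$ if $D\equiv 1\pmod 4$. $\langle a_1,\dots,a_k\rangle$ denotes the ideal generated by $a_1,\dots,a_k$. $I_p(D)$ is the set of all non-unit $z\in\mathbb{Z}[\sqrt{D}]$ such that $z\notin\langle p\rangle$ but there exists $m\in\mathbb{Z}[\sqrt{D}]$ with $m\notin\langle p\rangle$ and $zm\in\langle p\rangle$. *)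

theory Defs
  imports Complex_Main "HOL-Computational_Algebra.Squarefree"
begin

text \<open>The ring Z[sqrt D] (ring of integers of Q(sqrt D)), realised as a subring of the
complex numbers, with sqrt D the principal complex square root.\<close>

definition OK :: "int \<Rightarrow> complex set" where
  "OK D = (if D mod 4 = 1
     then {(of_int a + of_int b * csqrt (of_int D)) / 2 | a b. a mod 2 = b mod 2}
     else {of_int a + of_int b * csqrt (of_int D) | a b. True})"

definition dvd_in :: "int \<Rightarrow> complex \<Rightarrow> complex \<Rightarrow> bool" where
  "dvd_in D x y \<longleftrightarrow> (\<exists>k\<in>OK D. y = x * k)"

definition unit_in :: "int \<Rightarrow> complex \<Rightarrow> bool" where
  "unit_in D z \<longleftrightarrow> z \<in> OK D \<and> (\<exists>w\<in>OK D. z * w = 1)"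

definition irreducible_in :: "int \<Rightarrow> complex \<Rightarrow> bool" where
  "irreducible_in D x \<longleftrightarrow> x \<in> OK D \<and> x \<noteq> 0 \<and> \<not> unit_in D x \<and>
     (\<forall>a\<in>OK D. \<forall>b\<in>OK D. x = a * b \<longrightarrow> unit_in D a \<or> unit_in D b)"

definition prime_in :: "int \<Rightarrow> complex \<Rightarrow> bool" where
  "prime_in D x \<longleftrightarrow> x \<in> OK D \<and> x \<noteq> 0 \<and> \<not> unit_in D x \<and>
     (\<forall>a\<in>OK D. \<forall>b\<in>OK D. dvd_in D x (a * b) \<longrightarrow> dvd_in D x a \<or> dvd_in D x b)"

definition ideal1 :: "int \<Rightarrow> complex \<Rightarrow> complex set" where
  "ideal1 D g = {g * x | x. x \<in> OK D}"

definition ideal2 :: "int \<Rightarrow> complex \<Rightarrow> complex \<Rightarrow> complex set" where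
  "ideal2 D a b = {a * x + b * y | x y. x \<in> OK D \<and> y \<in> OK D}"

definition principal_in :: "int \<Rightarrow> complex set \<Rightarrow> bool" where
  "principal_in D I \<longleftrightarrow> (\<exists>g\<in>OK D. I = ideal1 D g)"

definition Ip :: "int \<Rightarrow> int \<Rightarrow> complex set" where
  "Ip p D = {z \<in> OK D. \<not> unit_in D z \<and> z \<notin> ideal1 D (of_int p) \<and>
     (\<exists>m\<in>OK D. m \<notin> ideal1 D (of_int p) \<and> z * m \<in> ideal1 D (of_int p))}"

end

theory Submission
  imports Defs
begin

text \<open>Since p is irreducible, a generator g of a principal ideal <p,z> divides p, so it is
either an associate of p or a unit; hence <p,z> is principal exactly when z \<in> <p> or
1 \<in> <p,z>. It remains to see that z is a zero divisor modulo p exactly when neither happens.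
If 1 = pa + zb, then zm \<in> <p> forces m = pam + zmb \<in> <p>. If 1 \<notin> <p,z>, then by Bezout
the rational integers in <p,z> are multiples of p, and the conjugate z' of z is the
witness: z z' and z + z' are rational integers in <p,z>, so z z' \<in> <p>, and z' \<in> <p>
would give z \<in> <p>.\<close>

definition omega :: "int \<Rightarrow> complex" where
  "omega D = (if D mod 4 = 1 then (1 + csqrt (of_int D)) / 2 else csqrt (of_int D))"

lemma omega_quadratic: "\<exists>t n :: int. omega D * omega D = of_int t * omega D + of_int n"
proof (cases "D mod 4 = 1")
  case True
  then obtain k where k: "D = 1 + 4 * k" by (metis add.commute div_mod_decomp_int mult.commute)
  have "csqrt (of_int D) * csqrt (of_int D) = (of_int D :: complex)"
    using power2_csqrt[of "of_int D"] by (simp add: power2_eq_square)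
  then have "omega D * omega D = omega D + of_int k"
    using True k by (simp add: omega_def field_simps)
  then show ?thesis by (metis mult_1 of_int_1)
next
  case False
  then have "omega D * omega D = of_int 0 * omega D + of_int D"
    using power2_csqrt[of "of_int D"] by (simp add: omega_def power2_eq_square)
  then show ?thesis by blast
qed

lemma OK_eq: "OK D = {of_int x + of_int y * omega D | x y. True}"
proof (cases "D mod 4 = 1")
  case True
  show ?thesis
  proof (intro set_eqI iffI)
    fix z assume "z \<in> OK D"
    then obtain a b where z: "z = (of_int a + of_int b * csqrt (of_int D)) / 2"
      and "a mod 2 = b mod 2"
      using True by (auto simp: OK_def)
    then have "a = 2 * ((a - b) div 2) + b" by presburger
    then have "(of_int a :: complex) = 2 * of_int ((a - b) div 2) + of_int b"
      by (metis of_int_add of_int_mult of_int_numeral)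
    then have "z = of_int ((a - b) div 2) + of_int b * omega D"
      using z True by (simp add: omega_def field_simps)
    then show "z \<in> {of_int x + of_int y * omega D | x y. True}" by blast
  next
    fix z assume "z \<in> {of_int x + of_int y * omega D | x y. True}"
    then obtain x y where "z = of_int x + of_int y * omega D" by blast
    then have "z = (of_int (2 * x + y) + of_int y * csqrt (of_int D)) / 2"
      using True by (simp add: omega_def field_simps)
    moreover have "(2 * x + y) mod 2 = y mod 2" by presburger
    ultimately show "z \<in> OK D" using True unfolding OK_def by (simp only: if_P) blast
  qed
next
  case False
  then show ?thesis by (simp add: OK_def omega_def)
qed

lemma OK_elim:
  assumes "z \<in> OK D"
  obtains x y where "z = of_int x + of_int y * omega D"
  using assms unfolding OK_eq by blast

lemma OK_intro: "of_int x + of_int y * omega D \<in> OK D"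
  unfolding OK_eq by blast

lemma OK_of_int [simp]: "of_int n \<in> OK D"
  using OK_intro[of n 0 D] by simp

lemma OK_0 [simp]: "0 \<in> OK D" and OK_1 [simp]: "1 \<in> OK D"
  using OK_of_int[of 0 D] OK_of_int[of 1 D] by simp_all

lemma OK_add: "a \<in> OK D \<Longrightarrow> b \<in> OK D \<Longrightarrow> a + b \<in> OK D"
proof (elim OK_elim)
  fix x y u v
  assume "a = of_int x + of_int y * omega D" "b = of_int u + of_int v * omega D"
  then have "a + b = of_int (x + u) + of_int (y + v) * omega D"
    by (simp add: algebra_simps)
  then show "a + b \<in> OK D" by (simp only: OK_intro)
qed

lemma OK_diff: "a \<in> OK D \<Longrightarrow> b \<in> OK D \<Longrightarrow> a - b \<in> OK D"
proof (elim OK_elim)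
  fix x y u v
  assume "a = of_int x + of_int y * omega D" "b = of_int u + of_int v * omega D"
  then have "a - b = of_int (x - u) + of_int (y - v) * omega D"
    by (simp add: algebra_simps)
  then show "a - b \<in> OK D" by (simp only: OK_intro)
qed

lemma OK_mult: "a \<in> OK D \<Longrightarrow> b \<in> OK D \<Longrightarrow> a * b \<in> OK D"
proof (elim OK_elim)
  fix x y u v
  assume ab: "a = of_int x + of_int y * omega D" "b = of_int u + of_int v * omega D"
  obtain t n where tn: "omega D * omega D = of_int t * omega D + of_int n"
    using omega_quadratic by blast
  have "a * b = of_int x * of_int u + (of_int x * of_int v + of_int y * of_int u) * omega D
      + of_int y * of_int v * (omega D * omega D)"
    unfolding ab by (simp add: algebra_simps)
  also have "\<dots> = of_int (x * u + y * v * n) + of_int (x * v + y * u + y * v * t) * omega D"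
    unfolding tn by (simp add: algebra_simps)
  finally show "a * b \<in> OK D" by (simp only: OK_intro)
qed

text \<open>T - z is the conjugate of z, T its trace and N its norm.\<close>

lemma OK_conjugate:
  assumes "z \<in> OK D"
  obtains T N :: int where "z * (of_int T - z) = of_int N"
proof -
  obtain x y where z: "z = of_int x + of_int y * omega D"
    using assms by (rule OK_elim)
  obtain t n where tn: "omega D * omega D = of_int t * omega D + of_int n"
    using omega_quadratic by blast
  have "z * (of_int (2 * x + y * t) - z)
      = of_int x * of_int x + of_int x * of_int y * of_int t
        + of_int y * of_int y * (of_int t * omega D - omega D * omega D)"
    unfolding z by (simp add: algebra_simps)
  also have "\<dots> = of_int (x * x + x * y * t - n * y * y)"
    unfolding tn by (simp add: algebra_simps)
  finally show ?thesis by (rule that)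
qed

lemma ideal1_memI: "x \<in> OK D \<Longrightarrow> a * x \<in> ideal1 D a"
  unfolding ideal1_def by blast

lemma ideal2_memI: "x \<in> OK D \<Longrightarrow> y \<in> OK D \<Longrightarrow> a * x + b * y \<in> ideal2 D a b"
  unfolding ideal2_def by blast

lemma left_mem_ideal2: "a \<in> ideal2 D a b"
  using ideal2_memI[of 1 D 0 a b] by simp

lemma right_mem_ideal2: "b \<in> ideal2 D a b"
  using ideal2_memI[of 0 D 1 a b] by simp

lemma ideal2_eq_ideal1_if_mem:
  assumes "b \<in> ideal1 D a"
  shows "ideal2 D a b = ideal1 D a"
proof -
  obtain w where w: "w \<in> OK D" "b = a * w"
    using assms unfolding ideal1_def by blast
  have "a * x + b * y = a * (x + w * y)" for x y
    using w(2) by (simp add: algebra_simps)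
  moreover have "a * x = a * x + b * 0" for x
    by simp
  ultimately show ?thesis
    unfolding ideal1_def ideal2_def using w(1) OK_add OK_mult OK_0 by metis
qed

lemma ideal2_eq_ideal1_if_one_mem:
  assumes "a \<in> OK D" "b \<in> OK D" "1 \<in> ideal2 D a b"
  shows "ideal2 D a b = ideal1 D 1"
proof (intro set_eqI iffI)
  fix c assume "c \<in> ideal2 D a b"
  then have "c \<in> OK D"
    using assms(1,2) OK_add OK_mult unfolding ideal2_def by blast
  then show "c \<in> ideal1 D 1"
    using ideal1_memI[of c D 1] by simp
next
  fix c assume "c \<in> ideal1 D 1"
  then have c: "c \<in> OK D" unfolding ideal1_def by auto
  obtain x y where xy: "x \<in> OK D" "y \<in> OK D" "1 = a * x + b * y"
    using assms(3) unfolding ideal2_def by blast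
  then have "c = a * (x * c) + b * (y * c)"
    by (metis distrib_right mult.assoc mult_1)
  then show "c \<in> ideal2 D a b"
    using ideal2_memI OK_mult c xy(1,2) by metis
qed

lemma principal_ideal2_iff:
  assumes "irreducible_in D a" "b \<in> OK D"
  shows "principal_in D (ideal2 D a b) \<longleftrightarrow> b \<in> ideal1 D a \<or> 1 \<in> ideal2 D a b"
proof
  assume "principal_in D (ideal2 D a b)"
  then obtain g where g: "g \<in> OK D" "ideal2 D a b = ideal1 D g"
    unfolding principal_in_def by blast
  obtain k where k: "k \<in> OK D" "a = g * k"
    using left_mem_ideal2[of a D b] g(2) unfolding ideal1_def by blast
  then consider "unit_in D g" | "unit_in D k"
    using assms(1) g(1) unfolding irreducible_in_def by blast
  then show "b \<in> ideal1 D a \<or> 1 \<in> ideal2 D a b"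
  proof cases
    case 1
    then obtain v where "v \<in> OK D" "g * v = 1"
      unfolding unit_in_def by blast
    then show ?thesis
      using ideal1_memI g(2) by metis
  next
    case 2
    then obtain u where u: "u \<in> OK D" "k * u = 1"
      unfolding unit_in_def by blast
    obtain x where x: "x \<in> OK D" "b = g * x"
      using right_mem_ideal2[of b D a] g(2) unfolding ideal1_def by blast
    have "b = a * (u * x)"
      using k(2) u(2) x(2) by (metis mult.assoc mult.left_commute mult_1_right)
    then show ?thesis
      using ideal1_memI OK_mult u(1) x(1) by metis
  qed
next
  have "a \<in> OK D"
    using assms(1) unfolding irreducible_in_def by blast
  then show "b \<in> ideal1 D a \<or> 1 \<in> ideal2 D a b \<Longrightarrow> principal_in D (ideal2 D a b)"
    using ideal2_eq_ideal1_if_mem ideal2_eq_ideal1_if_one_mem assms(2) OK_1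
    unfolding principal_in_def by metis
qed

lemma mem_ideal1_if_one_mem_ideal2:
  assumes "1 \<in> ideal2 D a b" "m \<in> OK D" "b * m \<in> ideal1 D a"
  shows "m \<in> ideal1 D a"
proof -
  obtain x y where xy: "x \<in> OK D" "y \<in> OK D" "1 = a * x + b * y"
    using assms(1) unfolding ideal2_def by blast
  obtain c where c: "c \<in> OK D" "b * m = a * c"
    using assms(3) unfolding ideal1_def by blast
  have "m = a * (x * m + y * c)"
    using xy(3) c(2) by (metis distrib_left distrib_right mult.commute mult.left_commute mult_1)
  then show ?thesis
    using ideal1_memI OK_add OK_mult assms(2) xy(1,2) c(1) by metis
qed

lemma prime_dvd_if_of_int_mem_ideal2:
  assumes "prime p" "1 \<notin> ideal2 D (of_int p) z" "of_int n \<in> ideal2 D (of_int p) z"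
  shows "p dvd n"
proof (rule ccontr)
  assume "\<not> p dvd n"
  then obtain u v where uv: "u * p + v * n = 1"
    using assms(1) prime_imp_coprime bezout_int coprime_iff_gcd_eq_1 by metis
  obtain x y where xy: "x \<in> OK D" "y \<in> OK D" "of_int n = of_int p * x + z * y"
    using assms(3) unfolding ideal2_def by blast
  have "(1 :: complex) = of_int u * of_int p + of_int v * of_int n"
    using uv by (metis of_int_1 of_int_add of_int_mult)
  then have "1 = of_int p * (of_int u + of_int v * x) + z * (of_int v * y)"
    unfolding xy(3) by (simp add: algebra_simps)
  then show False
    using assms(2) ideal2_memI OK_add OK_mult OK_of_int xy(1,2) by metis
qed

lemma Ip_iff:
  assumes "prime p" "z \<in> OK D"
  shows "z \<in> Ip p D \<longleftrightarrow> z \<notin> ideal1 D (of_int p) \<and> 1 \<notin> ideal2 D (of_int p) z"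
proof
  show "z \<in> Ip p D \<Longrightarrow> z \<notin> ideal1 D (of_int p) \<and> 1 \<notin> ideal2 D (of_int p) z"
    unfolding Ip_def using mem_ideal1_if_one_mem_ideal2 by blast
next
  let ?P = "of_int p :: complex"
  assume z: "z \<notin> ideal1 D ?P \<and> 1 \<notin> ideal2 D ?P z"
  have "\<not> unit_in D z"
    using z ideal2_memI[OF OK_0, of _ D ?P z] unfolding unit_in_def by fastforce
  obtain T N where TN: "z * (of_int T - z) = of_int N"
    using assms(2) by (rule OK_conjugate)
  define z' where "z' = of_int T - z"
  have z'_OK: "z' \<in> OK D"
    unfolding z'_def using OK_diff OK_of_int assms(2) by blast
  have "of_int N = ?P * 0 + z * z'"
    using TN unfolding z'_def by simp
  then have "of_int N \<in> ideal2 D ?P z"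
    using ideal2_memI[OF OK_0 z'_OK] by metis
  then have "p dvd N"
    using prime_dvd_if_of_int_mem_ideal2[OF assms(1)] z by blast
  then obtain c where "N = p * c" by blast
  then have "z * z' \<in> ideal1 D ?P"
    using TN ideal1_memI[of "of_int c" D ?P] unfolding z'_def by simp
  moreover have "z' \<notin> ideal1 D ?P"
  proof
    assume "z' \<in> ideal1 D ?P"
    then obtain w where w: "w \<in> OK D" "z' = ?P * w"
      unfolding ideal1_def by blast
    then have "of_int T = ?P * w + z * 1"
      unfolding z'_def by (simp add: algebra_simps)
    then have "p dvd T"
      using prime_dvd_if_of_int_mem_ideal2[OF assms(1)] z ideal2_memI[OF w(1) OK_1] by metis
    then obtain e where "T = p * e" by blast
    then have "z = ?P * (of_int e - w)"
      using w(2) unfolding z'_def by (simp add: algebra_simps)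
    then show False
      using z ideal1_memI OK_diff OK_of_int w(1) by metis
  qed
  ultimately show "z \<in> Ip p D"
    unfolding Ip_def using assms(2) z z'_OK \<open>\<not> unit_in D z\<close> by blast
qed

theorem proposition2p1:
  fixes D p :: int and z :: complex
  assumes "squarefree D"
    and "prime p"
    and "irreducible_in D (of_int p)"
    and "\<not> prime_in D (of_int p)"
    and "z \<in> OK D"
  shows "z \<in> Ip p D \<longleftrightarrow> \<not> principal_in D (ideal2 D (of_int p) z)"
  using Ip_iff[OF assms(2,5)] principal_ideal2_iff[OF assms(3,5)] by blast

end
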